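(* Let $\mathcal{X}\subseteq\mathbb{R}^d$ be a closed convex set, let $T\ge 1$, let $(\eta_t)_{t\in[T-1]}$ be positive step sizes, and let $(f_t)_{t\in[T-1]}$ and $(f'_t)_{t\in[T-1]}$ be convex $L$-Lipschitz functions on $\mathcal{X}$. For each $t$ and $x$, let $\nabla f_t(x)$ and $\nabla f'_t(x)$ denote fixed (arbitrary) choices of subgradients of $f_t$ and $f'_t$ at $x$. Let $(x^t)_{t\in[T]}$ and $(y^t)_{t\in[T]}$ be defined by $x^1=y^1\in\mathcal{X}$ and, for all $t\in[T-1]$, $$x^{t+1}=\mathsf{Proj}_{\mathcal{X}}[x^t-\eta_t\nabla f_t(x^t)],\qquad y^{t+1}=\mathsf{Proj}_{\mathcal{X}}[y^t-\eta_t\nabla f'_t(y^t)].$$ Suppose that for every $t\in[T-1]$, $\|\nabla f_t(x^t)-\nabla f'_t(x^t)\|\le a_t$ for scalars $0\le a_t\le 2L$. Let $t_0=\inf\{t: f_t\neq f'_t\}$. Then $$\|x^T-y^T\|\le 2L\sqrt{\sum_{t=t_0}^{T-1}\eta_t^2}+2\sum_{t=t_0+1}^{T-1}\eta_t a_t .$$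
   Context: $\|\cdot\|$ is the Euclidean norm and $\mathsf{Proj}_{\mathcal{X}}$ is Euclidean projection onto $\mathcal{X}$. The functions are assumed $L$-Lipschitz on an open set containing $\mathcal{X}$, so all subgradients have norm at most $L$. Empty sums are $0$. *)

theory Defs
  imports "HOL-Analysis.Analysis"
begin

definition is_subgradient :: "'a::real_inner set \<Rightarrow> ('a \<Rightarrow> real) \<Rightarrow> 'a \<Rightarrow> 'a \<Rightarrow> bool" where
  "is_subgradient U f x g \<longleftrightarrow> (\<forall>y\<in>U. f y \<ge> f x + g \<bullet> (y - x))"

text \<open>First index t in [T-1] where the two function sequences differ; T (i.e. +infinity,
  which makes all sums empty) if they never differ.\<close>
definition first_diff :: "nat \<Rightarrow> (nat \<Rightarrow> 'a \<Rightarrow> real) \<Rightarrow> (nat \<Rightarrow> 'a \<Rightarrow> real) \<Rightarrow> nat" where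
  "first_diff T f f' = (let S = {t\<in>{1..T-1}. f t \<noteq> f' t} in if S = {} then T else Min S)"

end

theory Submission
  imports Defs
begin

(* Write d t = norm (x t - y t). The two runs coincide up to t0, so d t0 = 0. Afterwards the
   projection is nonexpansive and the subgradients of f' t are monotone; since the x-run uses
   grad (f t) (x t), which is within a t of grad (f' t) (x t), one step gives
     d (t+1)^2 <= d t^2 + 2 eta t a t d t + 4 L^2 eta t^2.
   Solving this recurrence by induction from d t0 = 0 yields
     d T <= 2 L sqrt (sum eta t^2) + sum_{t > t0} eta t a t,
   which is stronger than claimed by a factor 2 in the second term. *)

lemma first_diff_le: "first_diff T f f' \<le> T"
  by (auto simp: first_diff_def Let_def intro: order_trans[OF Min_le])

lemma one_le_first_diff: "1 \<le> T \<Longrightarrow> 1 \<le> first_diff T f f'"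
  by (auto simp: first_diff_def Let_def)

lemma eq_before_first_diff:
  assumes "1 \<le> t" "t < first_diff T f f'"
  shows "f t = f' t"
proof (rule ccontr)
  let ?S = "{t \<in> {1..T-1}. f t \<noteq> f' t}"
  assume "f t \<noteq> f' t"
  moreover have "t < T" using assms(2) first_diff_le[of T f f'] by simp
  ultimately have "t \<in> ?S" using assms(1) by simp
  then have "first_diff T f f' \<le> t"
    by (auto simp: first_diff_def Let_def)
  then show False using assms(2) by simp
qed

lemma iterates_agree_before_first_diff:
  assumes "x 1 = y 1"
    and x_step: "\<And>t. t \<in> {1..T-1} \<Longrightarrow> x (Suc t) = F t (f t) (x t)"
    and y_step: "\<And>t. t \<in> {1..T-1} \<Longrightarrow> y (Suc t) = F t (f' t) (y t)"
  shows "1 \<le> t \<Longrightarrow> t \<le> first_diff T f f' \<Longrightarrow> x t = y t"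
proof (induction t rule: dec_induct)
  case (step n)
  then have "n \<in> {1..T-1}" "f n = f' n" "x n = y n"
    using first_diff_le[of T f f'] eq_before_first_diff[of n T f f'] by auto
  then show ?case using x_step y_step by simp
qed (use assms(1) in simp)

lemma closest_point_iterates_in:
  assumes "closed X" "x 1 \<in> X"
    and step: "\<And>t. t \<in> {1..T-1} \<Longrightarrow> x (Suc t) = closest_point X (v t)"
  shows "t \<in> {1..T} \<Longrightarrow> x t \<in> X"
proof (induction t)
  case (Suc k)
  show ?case
  proof (cases "k = 0")
    case False
    then have "k \<in> {1..T-1}" using Suc.prems by auto
    then show ?thesis
      using step closest_point_in_set[OF \<open>closed X\<close>] \<open>x 1 \<in> X\<close> by auto
  qed (use \<open>x 1 \<in> X\<close> in simp)
qed simp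

lemma norm_subgradient_le:
  fixes f :: "'a::real_inner \<Rightarrow> real"
  assumes "open U" "z \<in> U" "L-lipschitz_on U f" "is_subgradient U f z g"
  shows "norm g \<le> L"
proof (cases "g = 0")
  case True
  then show ?thesis using lipschitz_on_nonneg[OF assms(3)] by simp
next
  case False
  obtain e where e: "e > 0" "ball z e \<subseteq> U"
    using assms(1,2) open_contains_ball by blast
  define w where "w = z + (e / 2 / norm g) *\<^sub>R g"
  have dist_wz: "dist w z = e / 2"
    using False e by (simp add: w_def dist_norm)
  then have "w \<in> U" using e by (auto simp: dist_commute)
  have "(e / 2) * norm g = g \<bullet> (w - z)"
    using False by (simp add: w_def power2_norm_eq_inner[symmetric] power2_eq_square)
  also have "\<dots> \<le> f w - f z"
    using assms(4) \<open>w \<in> U\<close> by (auto simp: is_subgradient_def)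
  also have "\<dots> \<le> L * dist w z"
    using lipschitz_onD[OF assms(3) \<open>w \<in> U\<close> assms(2)] by (simp add: dist_real_def)
  finally show ?thesis using e dist_wz by (simp add: mult.commute)
qed

lemma subgradient_monotone:
  fixes f :: "'a::real_inner \<Rightarrow> real"
  assumes "x \<in> U" "y \<in> U" "is_subgradient U f x gx" "is_subgradient U f y gy"
  shows "(gx - gy) \<bullet> (x - y) \<ge> 0"
proof -
  have "f y \<ge> f x + gx \<bullet> (y - x)" "f x \<ge> f y + gy \<bullet> (x - y)"
    using assms by (auto simp: is_subgradient_def)
  moreover have "gx \<bullet> (y - x) = - (gx \<bullet> (x - y))"
    by (simp add: inner_diff_right)
  ultimately show ?thesis by (simp add: inner_diff_left)
qed

lemma gradient_step_distance:
  fixes p q gp gq hp :: "'a::real_inner"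
  assumes "0 \<le> \<eta>" "norm gp \<le> L" "norm gq \<le> L"
    and monotone: "(hp - gq) \<bullet> (p - q) \<ge> 0" and "norm (gp - hp) \<le> a"
  shows "(norm ((p - \<eta> *\<^sub>R gp) - (q - \<eta> *\<^sub>R gq)))\<^sup>2
     \<le> (norm (p - q))\<^sup>2 + 2 * \<eta> * a * norm (p - q) + 4 * L\<^sup>2 * \<eta>\<^sup>2"
proof -
  let ?u = "p - q" and ?v = "gp - gq"
  have expand: "(norm ((p - \<eta> *\<^sub>R gp) - (q - \<eta> *\<^sub>R gq)))\<^sup>2
      = (norm ?u)\<^sup>2 - 2 * \<eta> * (?u \<bullet> ?v) + \<eta>\<^sup>2 * (norm ?v)\<^sup>2"
    unfolding power2_norm_eq_inner
    by (simp add: inner_diff_left inner_diff_right inner_commute power2_eq_square algebra_simps)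
  have "- (?u \<bullet> (gp - hp)) \<le> norm ?u * norm (gp - hp)"
    using Cauchy_Schwarz_ineq2[of ?u "gp - hp"] by linarith
  also have "\<dots> \<le> norm ?u * a"
    using assms(5) by (simp add: mult_left_mono)
  finally have "- (?u \<bullet> ?v) \<le> norm ?u * a"
    using monotone by (simp add: inner_diff_left inner_diff_right inner_commute)
  then have "2 * \<eta> * (- (?u \<bullet> ?v)) \<le> 2 * \<eta> * (norm ?u * a)"
    using \<open>0 \<le> \<eta>\<close> by (intro mult_left_mono) auto
  then have cross: "- 2 * \<eta> * (?u \<bullet> ?v) \<le> 2 * \<eta> * a * norm ?u"
    by (simp add: algebra_simps)
  have "norm ?v \<le> 2 * L"
    using norm_triangle_ineq4[of gp gq] assms(2,3) by linarith
  then have "(norm ?v)\<^sup>2 \<le> (2 * L)\<^sup>2"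
    by (intro power_mono) auto
  then have "\<eta>\<^sup>2 * (norm ?v)\<^sup>2 \<le> 4 * L\<^sup>2 * \<eta>\<^sup>2"
    by (simp add: power_mult_distrib mult_left_mono mult.commute)
  with expand cross show ?thesis by linarith
qed

lemma projected_subgradient_step_distance:
  fixes p q :: "'a::euclidean_space"
  assumes "closed X" "convex X" "open U" "X \<subseteq> U" "p \<in> X" "q \<in> X" "0 \<le> \<eta>"
    and "L-lipschitz_on U f" "L-lipschitz_on U f'"
    and gp: "is_subgradient U f p gp" and gq: "is_subgradient U f' q gq"
    and hp: "is_subgradient U f' p hp" and "norm (gp - hp) \<le> a"
  shows "(norm (closest_point X (p - \<eta> *\<^sub>R gp) - closest_point X (q - \<eta> *\<^sub>R gq)))\<^sup>2
     \<le> (norm (p - q))\<^sup>2 + 2 * \<eta> * a * norm (p - q) + 4 * L\<^sup>2 * \<eta>\<^sup>2"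
proof -
  have "p \<in> U" "q \<in> U" using assms(4-6) by auto
  have "norm (closest_point X (p - \<eta> *\<^sub>R gp) - closest_point X (q - \<eta> *\<^sub>R gq))
      \<le> norm ((p - \<eta> *\<^sub>R gp) - (q - \<eta> *\<^sub>R gq))"
    using closest_point_lipschitz[OF assms(2,1)] assms(5) by (auto simp: dist_norm)
  then have "(norm (closest_point X (p - \<eta> *\<^sub>R gp) - closest_point X (q - \<eta> *\<^sub>R gq)))\<^sup>2
      \<le> (norm ((p - \<eta> *\<^sub>R gp) - (q - \<eta> *\<^sub>R gq)))\<^sup>2"
    by (simp add: power_mono)
  also have "\<dots> \<le> (norm (p - q))\<^sup>2 + 2 * \<eta> * a * norm (p - q) + 4 * L\<^sup>2 * \<eta>\<^sup>2"
    by (rule gradient_step_distance[OF \<open>0 \<le> \<eta>\<close>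
        norm_subgradient_le[OF \<open>open U\<close> \<open>p \<in> U\<close> \<open>L-lipschitz_on U f\<close> gp]
        norm_subgradient_le[OF \<open>open U\<close> \<open>q \<in> U\<close> \<open>L-lipschitz_on U f'\<close> gq]
        subgradient_monotone[OF \<open>p \<in> U\<close> \<open>q \<in> U\<close> hp gq] \<open>norm (gp - hp) \<le> a\<close>])
  finally show ?thesis .
qed

lemma quadratic_recurrence_bound:
  fixes \<delta> b c :: "nat \<Rightarrow> real"
  assumes "s \<le> T" "0 \<le> D" "\<delta> s \<le> D"
    and \<delta>_nonneg: "\<And>n. 0 \<le> \<delta> n"
    and bc_nonneg: "\<And>n. s \<le> n \<Longrightarrow> n < T \<Longrightarrow> 0 \<le> b n \<and> 0 \<le> c n"
    and recurrence: "\<And>n. s \<le> n \<Longrightarrow> n < T \<Longrightarrow>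
      (\<delta> (Suc n))\<^sup>2 \<le> (\<delta> n)\<^sup>2 + 2 * b n * \<delta> n + c n"
  shows "\<delta> T \<le> sqrt (D\<^sup>2 + (\<Sum>n = s..<T. c n)) + (\<Sum>n = s..<T. b n)"
  using \<open>s \<le> T\<close> recurrence bc_nonneg
proof (induction T rule: dec_induct)
  case base
  then show ?case using assms(2,3) by simp
next
  case (step n)
  define A where "A = sqrt (D\<^sup>2 + (\<Sum>k = s..<n. c k))"
  define A' where "A' = sqrt (D\<^sup>2 + (\<Sum>k = s..<Suc n. c k))"
  define B where "B = (\<Sum>k = s..<n. b k)"
  have b: "0 \<le> b n" and c: "0 \<le> c n" using step.prems(2) step.hyps by auto
  have sums_nonneg: "0 \<le> (\<Sum>k = s..<n. c k)" "0 \<le> B"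
    using step.prems(2) step.hyps unfolding B_def by (auto intro!: sum_nonneg)
  have A: "0 \<le> A" "A\<^sup>2 + c n = A'\<^sup>2" "A \<le> A'"
    using sums_nonneg c step.hyps by (simp_all add: A_def A'_def)
  have IH: "\<delta> n \<le> A + B"
    using step.IH step.prems by (simp add: A_def B_def)
  have "(A + B)\<^sup>2 + c n = A'\<^sup>2 + 2 * A * B + B\<^sup>2"
    using A by (simp add: power2_sum)
  also have "\<dots> \<le> (A' + B)\<^sup>2"
    using A sums_nonneg by (simp add: power2_sum mult_right_mono)
  finally have square_step: "(A + B)\<^sup>2 + c n \<le> (A' + B)\<^sup>2" .
  have "(\<delta> (Suc n))\<^sup>2 \<le> (\<delta> n)\<^sup>2 + 2 * b n * \<delta> n + c n"
    using step.prems(1) step.hyps by simp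
  also have "\<dots> \<le> (A + B)\<^sup>2 + 2 * b n * (A + B) + c n"
    using IH \<delta>_nonneg b by (intro add_mono power_mono mult_left_mono) auto
  also have "\<dots> \<le> (A' + B)\<^sup>2 + 2 * b n * (A' + B)"
    using square_step mult_left_mono[OF _ b, of "A + B" "A' + B"] A by simp
  also have "\<dots> \<le> (A' + B)\<^sup>2 + 2 * b n * (A' + B) + (b n)\<^sup>2"
    by simp
  also have "\<dots> = (A' + B + b n)\<^sup>2"
    by algebra
  finally have "(\<delta> (Suc n))\<^sup>2 \<le> (A' + B + b n)\<^sup>2" .
  moreover have "0 \<le> A' + B + b n"
    using A b sums_nonneg by simp
  ultimately have "\<delta> (Suc n) \<le> A' + B + b n"
    by (rule power2_le_imp_le)
  then show ?case
    using step.hyps by (simp add: A'_def B_def)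
qed

lemma quadratic_recurrence_bound_from_zero:
  fixes \<delta> b c :: "nat \<Rightarrow> real"
  assumes "s \<le> T" "\<delta> s = 0"
    and \<delta>_nonneg: "\<And>n. 0 \<le> \<delta> n"
    and bc_nonneg: "\<And>n. s \<le> n \<Longrightarrow> n < T \<Longrightarrow> 0 \<le> b n \<and> 0 \<le> c n"
    and recurrence: "\<And>n. s \<le> n \<Longrightarrow> n < T \<Longrightarrow>
      (\<delta> (Suc n))\<^sup>2 \<le> (\<delta> n)\<^sup>2 + 2 * b n * \<delta> n + c n"
  shows "\<delta> T \<le> sqrt (\<Sum>n = s..<T. c n) + (\<Sum>n = Suc s..<T. b n)"
proof (cases "s = T")
  case True
  then show ?thesis using assms(2) by simp
next
  case False
  then have "s < T" using assms(1) by simp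
  have c: "0 \<le> c s" using bc_nonneg \<open>s < T\<close> by blast
  have "(\<delta> (Suc s))\<^sup>2 \<le> c s"
    using recurrence[of s] \<open>s < T\<close> assms(2) by simp
  then have "\<delta> (Suc s) \<le> sqrt (c s)"
    using real_le_rsqrt by blast
  then have "\<delta> T \<le> sqrt ((sqrt (c s))\<^sup>2 + (\<Sum>n = Suc s..<T. c n)) + (\<Sum>n = Suc s..<T. b n)"
    using \<open>s < T\<close> c \<delta>_nonneg bc_nonneg recurrence
    by (intro quadratic_recurrence_bound) auto
  then show ?thesis
    using c \<open>s < T\<close> by (simp add: sum.atLeast_Suc_lessThan)
qed

theorem lemma3p1:
  fixes X U :: "'a::euclidean_space set"
    and T :: nat and L :: real
    and \<eta> a :: "nat \<Rightarrow> real"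
    and f f' :: "nat \<Rightarrow> 'a \<Rightarrow> real"
    and grad :: "('a \<Rightarrow> real) \<Rightarrow> 'a \<Rightarrow> 'a"
    and x y :: "nat \<Rightarrow> 'a"
  assumes X_closed: "closed X" and X_convex: "convex X"
    and U_open: "open U" and XU: "X \<subseteq> U"
    and T_ge: "T \<ge> 1"
    and eta_pos: "\<And>t. t \<in> {1..T-1} \<Longrightarrow> \<eta> t > 0"
    and f_convex: "\<And>t. t \<in> {1..T-1} \<Longrightarrow> convex_on U (f t)"
    and f'_convex: "\<And>t. t \<in> {1..T-1} \<Longrightarrow> convex_on U (f' t)"
    and f_lip: "\<And>t. t \<in> {1..T-1} \<Longrightarrow> L-lipschitz_on U (f t)"
    and f'_lip: "\<And>t. t \<in> {1..T-1} \<Longrightarrow> L-lipschitz_on U (f' t)"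
    and grad_f: "\<And>t z. t \<in> {1..T-1} \<Longrightarrow> z \<in> X \<Longrightarrow> is_subgradient U (f t) z (grad (f t) z)"
    and grad_f': "\<And>t z. t \<in> {1..T-1} \<Longrightarrow> z \<in> X \<Longrightarrow> is_subgradient U (f' t) z (grad (f' t) z)"
    and x1: "x 1 \<in> X" and xy1: "y 1 = x 1"
    and x_step: "\<And>t. t \<in> {1..T-1} \<Longrightarrow>
        x (Suc t) = closest_point X (x t - \<eta> t *\<^sub>R grad (f t) (x t))"
    and y_step: "\<And>t. t \<in> {1..T-1} \<Longrightarrow>
        y (Suc t) = closest_point X (y t - \<eta> t *\<^sub>R grad (f' t) (y t))"
    and a_bound: "\<And>t. t \<in> {1..T-1} \<Longrightarrow> norm (grad (f t) (x t) - grad (f' t) (x t)) \<le> a t"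
    and a_range: "\<And>t. t \<in> {1..T-1} \<Longrightarrow> 0 \<le> a t \<and> a t \<le> 2 * L"
  shows "norm (x T - y T) \<le>
      2 * L * sqrt (\<Sum>t = first_diff T f f' .. T-1. (\<eta> t)\<^sup>2)
      + 2 * (\<Sum>t = first_diff T f f' + 1 .. T-1. \<eta> t * a t)"
proof -
  define t0 where "t0 = first_diff T f f'"
  have t0: "1 \<le> t0" "t0 \<le> T"
    using one_le_first_diff[OF T_ge] first_diff_le unfolding t0_def by auto
  have "x t0 = y t0"
    using iterates_agree_before_first_diff[where T = T
        and F = "\<lambda>t g z. closest_point X (z - \<eta> t *\<^sub>R grad g z)",
        OF xy1[symmetric] x_step y_step] t0
    unfolding t0_def by simp
  have y1: "y 1 \<in> X" using x1 xy1 by simp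
  have step_nonneg: "0 \<le> \<eta> n * a n" if "n \<in> {1..T-1}" for n
    using eta_pos[OF that] a_range[OF that] by simp
  have recurrence: "(norm (x (Suc n) - y (Suc n)))\<^sup>2 \<le> (norm (x n - y n))\<^sup>2
      + 2 * (\<eta> n * a n) * norm (x n - y n) + 4 * L\<^sup>2 * (\<eta> n)\<^sup>2" if "n \<in> {1..T-1}" for n
  proof -
    have xn: "x n \<in> X" and yn: "y n \<in> X"
      using closest_point_iterates_in[where T = T and x = x, OF X_closed x1 x_step]
        closest_point_iterates_in[where T = T and x = y, OF X_closed y1 y_step] that by auto
    show ?thesis
      unfolding x_step[OF that] y_step[OF that] mult.assoc[symmetric]
      by (rule projected_subgradient_step_distance[OF X_closed X_convex U_open XU xn yn
            less_imp_le[OF eta_pos[OF that]] f_lip[OF that] f'_lip[OF that]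
            grad_f[OF that xn] grad_f'[OF that yn] grad_f'[OF that xn] a_bound[OF that]])
  qed
  have "norm (x T - y T)
      \<le> sqrt (\<Sum>n = t0..<T. 4 * L\<^sup>2 * (\<eta> n)\<^sup>2) + (\<Sum>n = Suc t0..<T. \<eta> n * a n)"
    using t0 \<open>x t0 = y t0\<close> recurrence step_nonneg
    by (intro quadratic_recurrence_bound_from_zero[where \<delta> = "\<lambda>n. norm (x n - y n)"]) auto
  also have "\<dots> \<le> 2 * L * sqrt (\<Sum>n = t0..<T. (\<eta> n)\<^sup>2) + 2 * (\<Sum>n = Suc t0..<T. \<eta> n * a n)"
  proof (intro add_mono)
    have "sqrt (\<Sum>n = t0..<T. 4 * L\<^sup>2 * (\<eta> n)\<^sup>2) = 2 * \<bar>L\<bar> * sqrt (\<Sum>n = t0..<T. (\<eta> n)\<^sup>2)"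
      by (simp add: sum_distrib_left[symmetric] real_sqrt_mult power_mult_distrib)
    moreover have "0 \<le> L \<or> t0 = T"
      using t0 lipschitz_on_nonneg[OF f_lip[of t0]] by force
    ultimately show "sqrt (\<Sum>n = t0..<T. 4 * L\<^sup>2 * (\<eta> n)\<^sup>2)
        \<le> 2 * L * sqrt (\<Sum>n = t0..<T. (\<eta> n)\<^sup>2)"
      by auto
    show "(\<Sum>n = Suc t0..<T. \<eta> n * a n) \<le> 2 * (\<Sum>n = Suc t0..<T. \<eta> n * a n)"
      using sum_nonneg[of "{Suc t0..<T}" "\<lambda>n. \<eta> n * a n"] step_nonneg t0 by force
  qed
  finally show ?thesis
    using T_ge by (simp add: t0_def atLeastLessThanSuc_atLeastAtMost[symmetric])
qed

end
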